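(* Let $K$ be an alphabet space and $\sigma:K\to K^+$ a primitive generalized substitution. Then for any two letters $a,b\in K$, $\mathcal L(\sigma,a)=\mathcal L(\sigma,b)=\mathcal L(\sigma)$.
   Context: An alphabet space is a compact zero-dimensional metric space $K$ with at least two points; $K^n$ is the set of words of length $n$ with the product topology, $K^+=\bigcup_{n\ge1}K^n$. A generalized substitution is a map $\sigma:K\to K^+$ with $a\mapsto|\sigma(a)|$ continuous and, for each $j$, $a\mapsto$ ($j$-th letter of $\sigma(a)$) continuous on $\{a:|\sigma(a)|\ge j\}$; it is extended to words by concatenation. $\sigma$ is primitive if for every nonempty open $V\subset K$ there is $j$ such that for all $a\in K$ and $k\ge j$ some letter of $\sigma^k(a)$ lies in $V$. $\mathcal L(\sigma,a)$ is the set of words $w\in K^+$ that are subwords of $\sigma^j(a)$ for some $j\in\mathbb N$, or are limits in $K^{|w|}$ of such words; $\mathcal L(\sigma)=\bigcup_{a\in K}\mathcal L(\sigma,a)$. *)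

theory Defs
  imports "HOL-Analysis.Analysis" "HOL-Library.Sublist"
begin

definition zero_dimensional :: "'a::metric_space set \<Rightarrow> bool" where
  "zero_dimensional K \<longleftrightarrow>
     (\<forall>x\<in>K. \<forall>U. openin (top_of_set K) U \<and> x \<in> U \<longrightarrow>
        (\<exists>C. openin (top_of_set K) C \<and> closedin (top_of_set K) C \<and> x \<in> C \<and> C \<subseteq> U))"

definition alphabet_space :: "'a::metric_space set \<Rightarrow> bool" where
  "alphabet_space K \<longleftrightarrow> compact K \<and> zero_dimensional K \<and> (\<exists>x\<in>K. \<exists>y\<in>K. x \<noteq> y)"

text \<open>Generalized substitution on K (words are lists; K^+ = nonempty lists over K).
  Letter positions are 0-indexed here.\<close>
definition gen_subst :: "'a::metric_space set \<Rightarrow> ('a \<Rightarrow> 'a list) \<Rightarrow> bool" where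
  "gen_subst K \<sigma> \<longleftrightarrow>
     (\<forall>a\<in>K. \<sigma> a \<noteq> [] \<and> set (\<sigma> a) \<subseteq> K) \<and>
     continuous_on K (\<lambda>a. length (\<sigma> a)) \<and>
     (\<forall>j. continuous_on {a\<in>K. j < length (\<sigma> a)} (\<lambda>a. \<sigma> a ! j))"

definition subst_word :: "('a \<Rightarrow> 'a list) \<Rightarrow> 'a list \<Rightarrow> 'a list" where
  "subst_word \<sigma> w = concat (map \<sigma> w)"

definition subst_iter :: "('a \<Rightarrow> 'a list) \<Rightarrow> nat \<Rightarrow> 'a \<Rightarrow> 'a list" where
  "subst_iter \<sigma> k a = (subst_word \<sigma> ^^ k) [a]"

definition primitive :: "'a::metric_space set \<Rightarrow> ('a \<Rightarrow> 'a list) \<Rightarrow> bool" where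
  "primitive K \<sigma> \<longleftrightarrow>
     (\<forall>V. openin (top_of_set K) V \<and> V \<noteq> {} \<longrightarrow>
        (\<exists>j. \<forall>a\<in>K. \<forall>k\<ge>j. \<exists>x\<in>set (subst_iter \<sigma> k a). x \<in> V))"

definition lang0 :: "('a \<Rightarrow> 'a list) \<Rightarrow> 'a \<Rightarrow> 'a list set" where
  "lang0 \<sigma> a = {w. w \<noteq> [] \<and> (\<exists>j. sublist w (subst_iter \<sigma> j a))}"

text \<open>L(sigma,a): closure of lang0 in each K^n with the product topology
  (written out: w is approximated letterwise by words of the same length).\<close>
definition lang_letter :: "'a::metric_space set \<Rightarrow> ('a \<Rightarrow> 'a list) \<Rightarrow> 'a \<Rightarrow> 'a list set" where
  "lang_letter K \<sigma> a = {w. w \<noteq> [] \<and> set w \<subseteq> K \<and>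
     (\<forall>e>0. \<exists>v\<in>lang0 \<sigma> a. length v = length w \<and> (\<forall>i<length w. dist (v ! i) (w ! i) < e))}"

definition lang :: "'a::metric_space set \<Rightarrow> ('a \<Rightarrow> 'a list) \<Rightarrow> 'a list set" where
  "lang K \<sigma> = (\<Union>a\<in>K. lang_letter K \<sigma> a)"

end

theory Submission
  imports Defs
begin

text \<open>If \<open>x\<close> occurs in \<open>\<sigma>\<^sup>k(b)\<close> then \<open>\<sigma>\<^sup>j(x)\<close> is a factor of \<open>\<sigma>\<^sup>j\<^sup>+\<^sup>k(b)\<close>. Continuity of \<open>\<sigma>\<^sup>j\<close>
  on words makes \<open>\<sigma>\<^sup>j(x)\<close> letterwise close to \<open>\<sigma>\<^sup>j(a)\<close> whenever \<open>x\<close> is close to \<open>a\<close>, and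
  primitivity puts such an \<open>x\<close> into \<open>\<sigma>\<^sup>k(b)\<close>. Hence every factor of some \<open>\<sigma>\<^sup>j(a)\<close> is
  approximated by factors of iterates of \<open>b\<close>, so \<open>\<L>(\<sigma>,a) \<subseteq> \<L>(\<sigma>,b)\<close>, and symmetry
  gives equality.\<close>

definition close_words :: "real \<Rightarrow> 'a::metric_space list \<Rightarrow> 'a list \<Rightarrow> bool" where
  "close_words e u v \<longleftrightarrow> length u = length v \<and> (\<forall>i<length u. dist (u ! i) (v ! i) < e)"

lemma close_words_refl: "e > 0 \<Longrightarrow> close_words e u u"
  by (simp add: close_words_def)

lemma close_words_mono: "close_words d u v \<Longrightarrow> d \<le> e \<Longrightarrow> close_words e u v"
  by (auto simp: close_words_def)

lemma close_words_sym: "close_words e u v \<Longrightarrow> close_words e v u"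
  by (simp add: close_words_def dist_commute)

lemma close_words_trans:
  "close_words d u v \<Longrightarrow> close_words e v w \<Longrightarrow> close_words (d + e) u w"
  unfolding close_words_def by (smt (verit) dist_triangle)

lemma close_words_append:
  "close_words e u v \<Longrightarrow> close_words e u' v' \<Longrightarrow> close_words e (u @ u') (v @ v')"
  by (auto simp: close_words_def nth_append)

lemma close_words_Cons_iff:
  "close_words e (x # u) (y # v) \<longleftrightarrow> dist x y < e \<and> close_words e u v"
  by (auto simp: close_words_def less_Suc_eq_0_disj)

lemma close_words_factor:
  assumes "close_words e (p @ v @ q) t"
  shows "\<exists>v'. sublist v' t \<and> close_words e v v'"
proof -
  define v' where "v' = take (length v) (drop (length p) t)"
  have len: "length t = length p + length v + length q"
    using assms by (simp add: close_words_def)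
  have "sublist v' t"
    unfolding v'_def by (metis append_take_drop_id sublist_appendI)
  moreover have "close_words e v v'"
    unfolding close_words_def
  proof (intro conjI allI impI)
    show "length v = length v'" using len by (simp add: v'_def)
    fix i assume "i < length v"
    with assms have "dist ((p @ v @ q) ! (length p + i)) (t ! (length p + i)) < e"
      unfolding close_words_def by (metis add_less_cancel_left length_append trans_less_add1)
    with \<open>i < length v\<close> len show "dist (v ! i) (v' ! i) < e"
      by (simp add: v'_def nth_append)
  qed
  ultimately show ?thesis by blast
qed

lemma lang_letter_iff:
  "w \<in> lang_letter K \<sigma> a \<longleftrightarrow>
     w \<noteq> [] \<and> set w \<subseteq> K \<and> (\<forall>e>0. \<exists>v\<in>lang0 \<sigma> a. close_words e v w)"
  by (auto simp: lang_letter_def close_words_def cong: conj_cong)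

lemma subst_word_append: "subst_word \<sigma> (u @ v) = subst_word \<sigma> u @ subst_word \<sigma> v"
  by (simp add: subst_word_def)

lemma funpow_subst_word_append:
  "(subst_word \<sigma> ^^ j) (u @ v) = (subst_word \<sigma> ^^ j) u @ (subst_word \<sigma> ^^ j) v"
  by (induction j) (simp_all add: subst_word_append)

lemma funpow_subst_word_subset:
  assumes "gen_subst K \<sigma>" "set u \<subseteq> K"
  shows "set ((subst_word \<sigma> ^^ j) u) \<subseteq> K"
  using assms(2) by (induction j) (use assms(1) in \<open>auto simp: gen_subst_def subst_word_def\<close>)

lemma subst_iter_add_factor:
  assumes "x \<in> set (subst_iter \<sigma> k b)"
  shows "sublist ((subst_word \<sigma> ^^ j) [x]) (subst_iter \<sigma> (j + k) b)"
proof -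
  obtain r s where "subst_iter \<sigma> k b = r @ [x] @ s"
    using assms by (metis append_Cons append_Nil split_list)
  then have "subst_iter \<sigma> (j + k) b =
      (subst_word \<sigma> ^^ j) r @ (subst_word \<sigma> ^^ j) [x] @ (subst_word \<sigma> ^^ j) s"
    by (simp only: subst_iter_def funpow_add comp_apply funpow_subst_word_append)
  then show ?thesis by (simp add: sublist_appendI)
qed

lemma eventually_close_subst_letter:
  assumes \<sigma>: "gen_subst K \<sigma>" and "x \<in> K" and "e > 0"
  shows "\<forall>\<^sub>F y in at x within K. close_words e (\<sigma> x) (\<sigma> y)"
proof -
  have "((\<lambda>a. length (\<sigma> a)) \<longlongrightarrow> length (\<sigma> x)) (at x within K)"
    using \<sigma> \<open>x \<in> K\<close> by (simp add: gen_subst_def continuous_on_def)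
  then have same_length: "\<forall>\<^sub>F y in nhds x. y \<noteq> x \<longrightarrow> y \<in> K \<longrightarrow> length (\<sigma> y) = length (\<sigma> x)"
    by (simp add: tendsto_discrete eventually_at_filter)
  have letter: "\<forall>\<^sub>F y in nhds x. y \<noteq> x \<longrightarrow> y \<in> K \<longrightarrow> length (\<sigma> y) = length (\<sigma> x) \<longrightarrow>
                  dist (\<sigma> x ! j) (\<sigma> y ! j) < e"
    if "j < length (\<sigma> x)" for j
  proof -
    let ?S = "{a\<in>K. j < length (\<sigma> a)}"
    have "((\<lambda>a. \<sigma> a ! j) \<longlongrightarrow> \<sigma> x ! j) (at x within ?S)"
      using \<sigma> \<open>x \<in> K\<close> that by (simp add: gen_subst_def continuous_on_def)
    then have "\<forall>\<^sub>F y in at x within ?S. dist (\<sigma> y ! j) (\<sigma> x ! j) < e"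
      using \<open>e > 0\<close> by (rule tendstoD)
    then show ?thesis
      unfolding eventually_at_filter by eventually_elim (use that in \<open>auto simp: dist_commute\<close>)
  qed
  then have "\<forall>\<^sub>F y in nhds x. \<forall>j\<in>{..<length (\<sigma> x)}. y \<noteq> x \<longrightarrow> y \<in> K \<longrightarrow>
                 length (\<sigma> y) = length (\<sigma> x) \<longrightarrow> dist (\<sigma> x ! j) (\<sigma> y ! j) < e"
    by (intro eventually_ball_finite) auto
  with same_length
  have "\<forall>\<^sub>F y in nhds x. y \<noteq> x \<longrightarrow> y \<in> K \<longrightarrow> close_words e (\<sigma> x) (\<sigma> y)"
    unfolding close_words_def by eventually_elim auto
  then show ?thesis
    by (simp add: eventually_at_filter)
qed

lemma subst_word_continuous:
  assumes \<sigma>: "gen_subst K \<sigma>" and "set u \<subseteq> K" and "e > 0"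
  shows "\<exists>d>0. \<forall>u'. set u' \<subseteq> K \<longrightarrow> close_words d u u' \<longrightarrow>
           close_words e (subst_word \<sigma> u) (subst_word \<sigma> u')"
  using \<open>set u \<subseteq> K\<close>
proof (induction u)
  case Nil
  show ?case by (auto simp: close_words_def subst_word_def intro: exI[of _ 1])
next
  case (Cons x u)
  then obtain d where "d > 0" and d: "\<And>u'. set u' \<subseteq> K \<Longrightarrow> close_words d u u' \<Longrightarrow>
      close_words e (subst_word \<sigma> u) (subst_word \<sigma> u')"
    by auto
  obtain d' where "d' > 0" and d': "\<And>y. y \<in> K \<Longrightarrow> dist y x < d' \<Longrightarrow> close_words e (\<sigma> x) (\<sigma> y)"
  proof -
    from eventually_close_subst_letter[OF \<sigma> _ \<open>e > 0\<close>, of x] Cons.prems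
    obtain d' where "d' > 0" "\<And>y. y \<in> K \<Longrightarrow> y \<noteq> x \<Longrightarrow> dist y x < d' \<Longrightarrow> close_words e (\<sigma> x) (\<sigma> y)"
      by (auto simp: eventually_at)
    with close_words_refl[OF \<open>e > 0\<close>] show thesis
      using that by metis
  qed
  have "close_words e (subst_word \<sigma> (x # u)) (subst_word \<sigma> u')"
    if u'K: "set u' \<subseteq> K" and close_u': "close_words (min d d') (x # u) u'" for u'
  proof -
    obtain y v where "u' = y # v"
      using close_u' by (cases u') (auto simp: close_words_def)
    with u'K close_u' have "close_words e (\<sigma> x) (\<sigma> y)" "close_words e (subst_word \<sigma> u) (subst_word \<sigma> v)"
      by (auto simp: close_words_Cons_iff dist_commute intro!: d d' elim: close_words_mono)
    with \<open>u' = y # v\<close> show ?thesis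
      by (simp add: subst_word_def close_words_append)
  qed
  with \<open>d > 0\<close> \<open>d' > 0\<close> show ?case
    by (intro exI[of _ "min d d'"]) auto
qed

lemma funpow_subst_word_continuous:
  assumes \<sigma>: "gen_subst K \<sigma>" and "set u \<subseteq> K" and "e > 0"
  shows "\<exists>d>0. \<forall>u'. set u' \<subseteq> K \<longrightarrow> close_words d u u' \<longrightarrow>
           close_words e ((subst_word \<sigma> ^^ j) u) ((subst_word \<sigma> ^^ j) u')"
  using \<open>e > 0\<close>
proof (induction j arbitrary: e)
  case 0
  then show ?case by auto
next
  case (Suc j)
  have "set ((subst_word \<sigma> ^^ j) u) \<subseteq> K"
    using funpow_subst_word_subset[OF \<sigma> \<open>set u \<subseteq> K\<close>] .
  then obtain d' where "d' > 0" and d': "\<And>w. set w \<subseteq> K \<Longrightarrow> close_words d' ((subst_word \<sigma> ^^ j) u) w \<Longrightarrow>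
      close_words e (subst_word \<sigma> ((subst_word \<sigma> ^^ j) u)) (subst_word \<sigma> w)"
    using subst_word_continuous[OF \<sigma> _ Suc.prems] by blast
  obtain d where "d > 0" and d: "\<And>u'. set u' \<subseteq> K \<Longrightarrow> close_words d u u' \<Longrightarrow>
      close_words d' ((subst_word \<sigma> ^^ j) u) ((subst_word \<sigma> ^^ j) u')"
    using Suc.IH[OF \<open>d' > 0\<close>] by blast
  have "close_words e ((subst_word \<sigma> ^^ Suc j) u) ((subst_word \<sigma> ^^ Suc j) u')"
    if "set u' \<subseteq> K" "close_words d u u'" for u'
    using d'[OF funpow_subst_word_subset[OF \<sigma> \<open>set u' \<subseteq> K\<close>] d[OF that]] by simp
  with \<open>d > 0\<close> show ?case by blast
qed

lemma lang0_approximated_from_any_letter: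
  assumes \<sigma>: "gen_subst K \<sigma>" and prim: "primitive K \<sigma>" and "a \<in> K" and "b \<in> K"
    and "v \<in> lang0 \<sigma> a" and "e > 0"
  shows "\<exists>v'\<in>lang0 \<sigma> b. close_words e v v'"
proof -
  obtain j p q where "v \<noteq> []" and v_factor: "subst_iter \<sigma> j a = p @ v @ q"
    using \<open>v \<in> lang0 \<sigma> a\<close> by (auto simp: lang0_def sublist_def)
  obtain d where "d > 0" and d: "\<And>u'. set u' \<subseteq> K \<Longrightarrow> close_words d [a] u' \<Longrightarrow>
      close_words e (subst_iter \<sigma> j a) ((subst_word \<sigma> ^^ j) u')"
    using funpow_subst_word_continuous[OF \<sigma> _ \<open>e > 0\<close>, of "[a]" j] \<open>a \<in> K\<close>
    unfolding subst_iter_def by auto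
  have "openin (top_of_set K) (K \<inter> ball a d)" "K \<inter> ball a d \<noteq> {}"
    using \<open>a \<in> K\<close> \<open>d > 0\<close> by (auto simp: openin_open_Int)
  then obtain k where "\<exists>x\<in>set (subst_iter \<sigma> k b). x \<in> K \<inter> ball a d"
    using prim \<open>b \<in> K\<close> unfolding primitive_def by blast
  then obtain x where "x \<in> set (subst_iter \<sigma> k b)" "x \<in> K" "dist a x < d"
    by auto
  then have "close_words e (p @ v @ q) ((subst_word \<sigma> ^^ j) [x])"
    using d[of "[x]"] v_factor by (simp add: close_words_Cons_iff close_words_def)
  then obtain v' where "sublist v' ((subst_word \<sigma> ^^ j) [x])" "close_words e v v'"
    using close_words_factor by blast
  moreover have "sublist ((subst_word \<sigma> ^^ j) [x]) (subst_iter \<sigma> (j + k) b)"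
    using subst_iter_add_factor[OF \<open>x \<in> set (subst_iter \<sigma> k b)\<close>] .
  ultimately have "v' \<in> lang0 \<sigma> b"
    using \<open>v \<noteq> []\<close> by (auto simp: lang0_def close_words_def intro: sublist_order.order_trans)
  with \<open>close_words e v v'\<close> show ?thesis by blast
qed

lemma lang_letter_subset:
  assumes "gen_subst K \<sigma>" and "primitive K \<sigma>" and "a \<in> K" and "b \<in> K"
  shows "lang_letter K \<sigma> a \<subseteq> lang_letter K \<sigma> b"
proof
  fix w assume "w \<in> lang_letter K \<sigma> a"
  have "\<exists>v'\<in>lang0 \<sigma> b. close_words e v' w" if "e > 0" for e
  proof -
    have "e/2 > 0" using \<open>e > 0\<close> by simp
    then obtain v where "v \<in> lang0 \<sigma> a" and "close_words (e/2) v w"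
      using \<open>w \<in> lang_letter K \<sigma> a\<close> unfolding lang_letter_iff by blast
    obtain v' where "v' \<in> lang0 \<sigma> b" and "close_words (e/2) v v'"
      using lang0_approximated_from_any_letter[OF assms \<open>v \<in> lang0 \<sigma> a\<close> \<open>e/2 > 0\<close>] by blast
    have "close_words (e/2 + e/2) v' w"
      using close_words_sym[OF \<open>close_words (e/2) v v'\<close>] \<open>close_words (e/2) v w\<close>
      by (rule close_words_trans)
    with \<open>v' \<in> lang0 \<sigma> b\<close> show ?thesis by auto
  qed
  with \<open>w \<in> lang_letter K \<sigma> a\<close> show "w \<in> lang_letter K \<sigma> b"
    by (simp add: lang_letter_iff)
qed

theorem mainTheorem18:
  fixes K :: "'a::metric_space set" and \<sigma> :: "'a \<Rightarrow> 'a list"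
  assumes "alphabet_space K" and "gen_subst K \<sigma>" and "primitive K \<sigma>"
    and "a \<in> K" and "b \<in> K"
  shows "lang_letter K \<sigma> a = lang_letter K \<sigma> b \<and> lang_letter K \<sigma> b = lang K \<sigma>"
proof -
  have same: "lang_letter K \<sigma> c = lang_letter K \<sigma> b" if "c \<in> K" for c
    using lang_letter_subset[OF assms(2,3)] \<open>c \<in> K\<close> \<open>b \<in> K\<close> by (simp add: subset_antisym)
  have "lang K \<sigma> = (\<Union>c\<in>K. lang_letter K \<sigma> b)"
    unfolding lang_def using same by (rule SUP_cong[OF refl])
  also have "\<dots> = lang_letter K \<sigma> b"
    using \<open>b \<in> K\<close> by blast
  finally show ?thesis
    using same[OF \<open>a \<in> K\<close>] by simp
qed

end
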